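(* Let $A_\star\in\mathbb{R}^{n\times n}$. For any vector $x\in\mathbb{R}^n$ and any integer $k\ge n$, $$\{A\in\mathbb{R}^{n\times n}\mid Ax=A_\star x,\ A^2x=A_\star^2x,\dots,A^kx=A_\star^kx\}=\{A\in\mathbb{R}^{n\times n}\mid Ax=A_\star x,\ A^2x=A_\star^2x,\dots,A^nx=A_\star^nx\}.$$ *)

theory Defs
  imports "HOL-Analysis.Analysis"
begin

text \<open>Matrix power with respect to matrix multiplication (not the componentwise power).\<close>
primrec matrix_power :: "'a::semiring_1 ^ 'n ^ 'n \<Rightarrow> nat \<Rightarrow> 'a ^ 'n ^ 'n" where
  "matrix_power A 0 = mat 1"
| "matrix_power A (Suc m) = A ** matrix_power A m"

end

theory Submission
  imports Defs
begin

text \<open>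
  The Krylov vectors x, B x, B^2 x, ... cannot stay linearly independent past the n-th one,
  so some B^d x with d <= n lies in the span K of x, ..., B^(d-1) x. Then K is B-invariant and
  contains every B^m x. If A^j x = B^j x for all j <= d, the linear maps A and B agree on the
  spanning vectors of K, hence on K, and A^(m+1) x = A (B^m x) = B (B^m x) = B^(m+1) x
  follows by induction on m.
\<close>

definition krylov_space :: "'a::field ^ 'n ^ 'n \<Rightarrow> 'a ^ 'n \<Rightarrow> nat \<Rightarrow> ('a ^ 'n) set" where
  "krylov_space B x d = vec.span ((\<lambda>i. matrix_power B i *v x) ` {..<d})"

lemma matrix_power_Suc_mult_vec:
  "matrix_power A (Suc m) *v v = A *v (matrix_power A m *v v)"
  by (simp add: matrix_vector_mul_assoc)

lemma krylov_space_stabilises: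
  fixes B :: "'a::field ^ 'n ^ 'n"
  shows "\<exists>d\<le>CARD('n). matrix_power B d *v x \<in> krylov_space B x d"
proof (rule ccontr)
  assume no_dependence: "\<not> ?thesis"
  let ?S = "\<lambda>d. (\<lambda>i. matrix_power B i *v x) ` {..<d}"
  have "vec.independent (?S d) \<and> card (?S d) = d" if "d \<le> Suc CARD('n)" for d
    using that
  proof (induction d)
    case 0
    then show ?case by (simp add: vec.independent_empty)
  next
    case (Suc d)
    then have IH: "vec.independent (?S d)" "card (?S d) = d" by simp_all
    have new: "matrix_power B d *v x \<notin> vec.span (?S d)"
      using no_dependence Suc.prems by (simp add: krylov_space_def)
    then have "matrix_power B d *v x \<notin> ?S d"
      using vec.span_base by metis
    moreover have "?S (Suc d) = insert (matrix_power B d *v x) (?S d)"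
      by (simp add: lessThan_Suc)
    ultimately show ?case
      using vec.independent_insertI[OF new IH(1)] IH(2) by simp
  qed
  then have indep: "vec.independent (?S (Suc CARD('n)))"
    and card: "card (?S (Suc CARD('n))) = Suc CARD('n)"
    by simp_all
  have "card (?S (Suc CARD('n))) \<le> CARD('n)"
    using vec.independent_card_le_dim[OF subset_UNIV indep] by (simp only: vec_dim_card)
  with card show False
    by simp
qed

lemma krylov_space_invariant:
  assumes stable: "matrix_power B d *v x \<in> krylov_space B x d"
    and "v \<in> krylov_space B x d"
  shows "B *v v \<in> krylov_space B x d"
proof -
  let ?S = "(\<lambda>i. matrix_power B i *v x) ` {..<d}"
  have "B *v w \<in> krylov_space B x d" if "w \<in> ?S" for w
  proof -
    obtain i where "i < d" and w: "w = matrix_power B i *v x"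
      using \<open>w \<in> ?S\<close> by blast
    then consider "Suc i < d" | "Suc i = d" by linarith
    then show ?thesis
    proof cases
      case 1
      then have "matrix_power B (Suc i) *v x \<in> ?S" by blast
      then show ?thesis
        unfolding krylov_space_def w matrix_power_Suc_mult_vec[symmetric] by (rule vec.span_base)
    next
      case 2
      then show ?thesis
        using stable unfolding w matrix_power_Suc_mult_vec[symmetric] by simp
    qed
  qed
  then have "vec.span ((*v) B ` ?S) \<subseteq> krylov_space B x d"
    unfolding krylov_space_def by (intro vec.span_minimal) auto
  moreover have "B *v v \<in> vec.span ((*v) B ` ?S)"
    using \<open>v \<in> krylov_space B x d\<close> unfolding krylov_space_def vec.span_image by blast
  ultimately show ?thesis by blast
qed

lemma matrix_power_mult_vec_in_krylov_space:
  assumes "matrix_power B d *v x \<in> krylov_space B x d"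
  shows "matrix_power B m *v x \<in> krylov_space B x d"
proof (induction m)
  case 0
  show ?case
  proof (cases "d = 0")
    case True
    then show ?thesis
      using assms by simp
  next
    case False
    then have "matrix_power B 0 *v x \<in> (\<lambda>i. matrix_power B i *v x) ` {..<d}"
      by blast
    then show ?thesis
      unfolding krylov_space_def by (rule vec.span_base)
  qed
next
  case (Suc m)
  have "B *v (matrix_power B m *v x) \<in> krylov_space B x d"
    using krylov_space_invariant[OF assms Suc.IH] .
  then show ?case
    unfolding matrix_power_Suc_mult_vec .
qed

lemma matrix_power_mult_vec_eq_if_krylov_space_stable:
  assumes stable: "matrix_power B d *v x \<in> krylov_space B x d"
    and agree: "\<And>j. j \<le> d \<Longrightarrow> matrix_power A j *v x = matrix_power B j *v x"
  shows "matrix_power A m *v x = matrix_power B m *v x"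
proof (induction m)
  case 0
  then show ?case by simp
next
  case (Suc m)
  have "A *v v = B *v v" if "v \<in> krylov_space B x d" for v
  proof (rule vec.linear_eq_on_span[of "(*v) A" "(*v) B"])
    show "v \<in> vec.span ((\<lambda>i. matrix_power B i *v x) ` {..<d})"
      using that by (simp add: krylov_space_def)
  next
    fix w assume "w \<in> (\<lambda>i. matrix_power B i *v x) ` {..<d}"
    then obtain i where "i < d" "w = matrix_power B i *v x" by blast
    then show "A *v w = B *v w"
      using agree[of i] agree[of "Suc i"] by (simp only: matrix_power_Suc_mult_vec)
  qed simp_all
  then have "A *v (matrix_power B m *v x) = B *v (matrix_power B m *v x)"
    using matrix_power_mult_vec_in_krylov_space[OF stable] .
  then show ?case
    unfolding matrix_power_Suc_mult_vec Suc.IH .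
qed

lemma matrix_power_mult_vec_eq_if_eq_up_to_card:
  fixes A B :: "'a::field ^ 'n ^ 'n"
  assumes "\<forall>j\<in>{1..CARD('n)}. matrix_power A j *v x = matrix_power B j *v x"
  shows "matrix_power A m *v x = matrix_power B m *v x"
proof -
  obtain d where d: "d \<le> CARD('n)" and stable: "matrix_power B d *v x \<in> krylov_space B x d"
    using krylov_space_stabilises by blast
  have agree: "matrix_power A j *v x = matrix_power B j *v x" if "j \<le> CARD('n)" for j
    using assms that by (cases "j = 0") auto
  show ?thesis
  proof (rule matrix_power_mult_vec_eq_if_krylov_space_stable[OF stable])
    show "matrix_power A j *v x = matrix_power B j *v x" if "j \<le> d" for j
      using d that by (simp add: agree)
  qed
qed

theorem proposition14:
  fixes Astar :: "real ^ 'n ^ 'n" and x :: "real ^ 'n" and k :: nat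
  assumes "k \<ge> CARD('n)"
  shows "{A :: real ^ 'n ^ 'n. \<forall>j\<in>{1..k}. matrix_power A j *v x = matrix_power Astar j *v x}
       = {A :: real ^ 'n ^ 'n. \<forall>j\<in>{1..CARD('n)}. matrix_power A j *v x = matrix_power Astar j *v x}"
proof (rule Collect_cong)
  fix A :: "real ^ 'n ^ 'n"
  show "(\<forall>j\<in>{1..k}. matrix_power A j *v x = matrix_power Astar j *v x)
    \<longleftrightarrow> (\<forall>j\<in>{1..CARD('n)}. matrix_power A j *v x = matrix_power Astar j *v x)"
    using assms matrix_power_mult_vec_eq_if_eq_up_to_card[of A x Astar] by auto
qed

end
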